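(* For an integer $n\ge 0$ let $\Omega_n$ be the set of integer pairs $(p,q)$ with $0\le p\le n$, $0\le q\le n$, $(p,q)\ne(n,n)$, and let $\mathcal A_n$ be the linear span (over $\mathbb C$) of the rational functions $\frac{z^p\,\overline z^{\,q}}{(z-\overline z)^n}$, $(p,q)\in\Omega_n$, regarded as functions on the upper half-plane $\Lambda=\{z:\operatorname{Im}z>0\}$. Let $\mathcal A=\sum_{n\ge0}\mathcal A_n$. Consider the six operators $$\frac{\partial}{\partial z},\quad z\frac{\partial}{\partial z},\quad z^2\frac{\partial}{\partial z},\quad \frac{\partial}{\partial \overline z},\quad \overline z\frac{\partial}{\partial \overline z},\quad \overline z^{\,2}\frac{\partial}{\partial \overline z}.$$ Then: (a) $\mathcal A$ is invariant under each of these six operators; (b) the function $\frac{1}{z-\overline z}$ is cyclic in $\mathcal A$ for this family, i.e. the linear span of all functions obtained by applying finite products of these six operators (including the empty product) to $\frac1{z-\overline z}$ is equal to $\mathcal A$.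
   Context: $\frac{\partial}{\partial z}$, $\frac{\partial}{\partial\overline z}$ are the Wirtinger derivatives, $z$ and $\overline z$ are treated as independent variables in these rational functions. *)

theory Defs
  imports "HOL-Analysis.Analysis"
begin

text \<open>Functions of the two independent variables z and w (w plays the role of conj z),
  considered on the domain Im z > 0, Im w < 0 (i.e. z in the upper half-plane, w = conj z
  in the lower half-plane); all functions are set to 0 outside this domain.\<close>

type_synonym cfun2 = "complex \<Rightarrow> complex \<Rightarrow> complex"

definition dom2 :: "complex \<Rightarrow> complex \<Rightarrow> bool" where
  "dom2 z w \<longleftrightarrow> Im z > 0 \<and> Im w < 0"

definition restr :: "cfun2 \<Rightarrow> cfun2" where
  "restr f = (\<lambda>z w. if dom2 z w then f z w else 0)"

definition cspan2 :: "cfun2 set \<Rightarrow> cfun2 set" where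
  "cspan2 X = {f. \<exists>S c. finite S \<and> S \<subseteq> X \<and> f = (\<lambda>z w. \<Sum>g\<in>S. c g * g z w)}"

definition Omega :: "nat \<Rightarrow> (nat \<times> nat) set" where
  "Omega n = {(p, q). p \<le> n \<and> q \<le> n \<and> (p, q) \<noteq> (n, n)}"

definition basis_fun :: "nat \<Rightarrow> nat \<Rightarrow> nat \<Rightarrow> cfun2" where
  "basis_fun n p q = restr (\<lambda>z w. z ^ p * w ^ q / (z - w) ^ n)"

definition A_n :: "nat \<Rightarrow> cfun2 set" where
  "A_n n = cspan2 ((\<lambda>(p, q). basis_fun n p q) ` Omega n)"

definition A_all :: "cfun2 set" where
  "A_all = {f. \<exists>N g. finite N \<and> (\<forall>n\<in>N. g n \<in> A_n n) \<and> f = (\<lambda>z w. \<Sum>n\<in>N. g n z w)}"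

definition Dz :: "cfun2 \<Rightarrow> cfun2" where
  "Dz f = restr (\<lambda>z w. deriv (\<lambda>\<zeta>. f \<zeta> w) z)"

definition Dw :: "cfun2 \<Rightarrow> cfun2" where
  "Dw f = restr (\<lambda>z w. deriv (\<lambda>\<omega>. f z \<omega>) w)"

definition six_ops :: "(cfun2 \<Rightarrow> cfun2) set" where
  "six_ops = {Dz, (\<lambda>f z w. z * Dz f z w), (\<lambda>f z w. z ^ 2 * Dz f z w),
              Dw, (\<lambda>f z w. w * Dw f z w), (\<lambda>f z w. w ^ 2 * Dw f z w)}"

end

theory Submission
  imports Defs "HOL-Library.Function_Algebras"
begin

text \<open>
  Write \<open>e(n,p,q) = z^p w^q / (z - w)^n\<close>, with \<open>w\<close> in the role of \<open>conj z\<close>. Each of the six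
  operators sends \<open>e(n,p,q)\<close> to a combination of basis functions of levels \<open>n\<close> and \<open>n + 1\<close>,
  for instance \<open>z Dz e(n,p,q) = p e(n,p,q) - n e(n+1,p+1,q)\<close>, and the identity
  \<open>e(k,a,b) = e(k+1,a+1,b) - e(k+1,a,b+1)\<close> expresses every \<open>e(k,a,b)\<close> with \<open>a, b \<le> k\<close>,
  including the excluded index \<open>(k,k)\<close>, through basis functions of level \<open>k + 1\<close>. As the
  operators are linear on separately holomorphic functions, this gives invariance.

  Conversely the same formulas can be solved for their level-\<open>(n+1)\<close> term, because its
  coefficient is \<open>\<plusminus>n \<noteq> 0\<close>. Hence any invariant subspace containing \<open>e(1,0,0) = 1/(z - w)\<close>
  contains, level by level, every \<open>e(n,a,b)\<close> with \<open>a, b \<le> n\<close>; the rest of level one is reached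
  by climbing to levels two and three and descending with the identity above.
\<close>

interpretation fun2: vector_space "\<lambda>c (f::cfun2) z w. c * f z w"
  by unfold_locales (simp_all add: fun_eq_iff algebra_simps)

lemma sum_fun_apply: "sum F A x = (\<Sum>a\<in>A. F a x)"
  by (induction A rule: infinite_finite_induct) auto

lemma cspan2_eq_span: "cspan2 X = fun2.span X"
proof -
  have "(\<Sum>g\<in>S. (\<lambda>z w. c g * g z w)) = (\<lambda>z w. \<Sum>g\<in>S. c g * g z w)"
    for S and c :: "cfun2 \<Rightarrow> complex"
    by (simp add: fun_eq_iff sum_fun_apply)
  then show ?thesis
    unfolding cspan2_def fun2.span_explicit by auto
qed

lemma (in module) image_span_subset:
  assumes "subspace S" "X \<subseteq> S" "subspace W" "T ` X \<subseteq> W"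
    and lin: "\<And>a b x y. x \<in> S \<Longrightarrow> y \<in> S \<Longrightarrow>
      T (scale a x + scale b y) = scale a (T x) + scale b (T y)"
  shows "T ` span X \<subseteq> W"
proof -
  have "subspace {x \<in> S. T x \<in> W}"
  proof (rule subspaceI)
    show "0 \<in> {x \<in> S. T x \<in> W}"
      using lin[of 0 0 0 0] assms(1,3) by (simp add: subspace_0)
    show "x + y \<in> {x \<in> S. T x \<in> W}" if "x \<in> {x \<in> S. T x \<in> W}" "y \<in> {x \<in> S. T x \<in> W}" for x y
      using lin[of x y 1 1] that assms(1,3) by (simp add: subspace_add)
    show "scale c x \<in> {x \<in> S. T x \<in> W}" if "x \<in> {x \<in> S. T x \<in> W}" for c x
      using lin[of x x c 0] that assms(1,3) by (simp add: subspace_scale)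
  qed
  then have "span X \<subseteq> {x \<in> S. T x \<in> W}"
    using assms(2,4) by (intro span_minimal) auto
  then show ?thesis by auto
qed

lemma fun2_span_add:
  "f \<in> fun2.span S \<Longrightarrow> g \<in> fun2.span S \<Longrightarrow> (\<lambda>z w. f z w + g z w) \<in> fun2.span S"
  using fun2.span_add[of f S g] by (simp add: func_plus)

lemma fun2_span_diff:
  "f \<in> fun2.span S \<Longrightarrow> g \<in> fun2.span S \<Longrightarrow> (\<lambda>z w. f z w - g z w) \<in> fun2.span S"
  using fun2.span_diff[of f S g] by (simp add: fun_diff_def)

definition orbit :: "('a \<Rightarrow> 'a) set \<Rightarrow> 'a \<Rightarrow> 'a set" where
  "orbit F u = {foldr (\<circ>) Ts id u | Ts. set Ts \<subseteq> F}"

lemma orbit_base: "u \<in> orbit F u"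
  unfolding orbit_def by (auto intro!: exI[of _ "[]"])

lemma orbit_step:
  assumes "T \<in> F" "f \<in> orbit F u"
  shows "T f \<in> orbit F u"
proof -
  obtain Ts where "set Ts \<subseteq> F" "f = foldr (\<circ>) Ts id u"
    using assms(2) unfolding orbit_def by blast
  then have "set (T # Ts) \<subseteq> F" "T f = foldr (\<circ>) (T # Ts) id u"
    using assms(1) by auto
  then show ?thesis
    unfolding orbit_def by blast
qed

lemma orbit_subset:
  assumes "u \<in> W" "\<And>T. T \<in> F \<Longrightarrow> T ` W \<subseteq> W"
  shows "orbit F u \<subseteq> W"
proof -
  have "foldr (\<circ>) Ts id u \<in> W" if "set Ts \<subseteq> F" for Ts
    using that assms by (induction Ts) auto
  then show ?thesis
    unfolding orbit_def by blast
qed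


section \<open>Wirtinger derivatives of the basis functions\<close>

lemma dom2_imp_neq: "dom2 z w \<Longrightarrow> z \<noteq> w"
  by (auto simp: dom2_def)

lemma basis_fun_outside: "\<not> dom2 z w \<Longrightarrow> basis_fun n p q z w = 0"
  by (simp add: basis_fun_def restr_def)

lemma basis_fun_eq_diff:
  "basis_fun k a b = basis_fun (Suc k) (Suc a) b - basis_fun (Suc k) a (Suc b)"
proof (intro ext)
  fix z w :: complex
  show "basis_fun k a b z w = (basis_fun (Suc k) (Suc a) b - basis_fun (Suc k) a (Suc b)) z w"
  proof (cases "dom2 z w")
    case True
    then have "z - w \<noteq> 0" by (auto dest: dom2_imp_neq)
    moreover have "z ^ Suc a * w ^ b - z ^ a * w ^ Suc b = z ^ a * w ^ b * (z - w)"
      by (simp add: algebra_simps)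
    ultimately show ?thesis
      using True by (simp add: basis_fun_def restr_def diff_divide_distrib[symmetric])
  qed (simp add: basis_fun_def restr_def)
qed

lemma mult_z_basis_fun: "z * basis_fun n p q z w = basis_fun n (Suc p) q z w"
  by (simp add: basis_fun_def restr_def)

lemma mult_w_basis_fun: "w * basis_fun n p q z w = basis_fun n p (Suc q) z w"
  by (simp add: basis_fun_def restr_def algebra_simps)

lemma quotient_rule_power_eq:
  fixes a :: "'a::field"
  assumes "a \<noteq> 0"
  shows "(P * a ^ n - Q * (of_nat n * a ^ (n - 1))) / (a ^ n * a ^ n) = P / a ^ n - of_nat n * Q / a ^ Suc n"
  using assms by (cases n) (simp_all add: field_simps)

lemma basis_fun_has_derivative_z:
  assumes "dom2 z w"
  shows "((\<lambda>\<zeta>. basis_fun n p q \<zeta> w) has_field_derivative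
    of_nat p * basis_fun n (p - 1) q z w - of_nat n * basis_fun (Suc n) p q z w) (at z)"
proof (rule has_field_derivative_transform_within_open)
  have "z - w \<noteq> 0" using assms by (auto dest: dom2_imp_neq)
  have "((\<lambda>\<zeta>. \<zeta> ^ p * w ^ q / (\<zeta> - w) ^ n) has_field_derivative
      (of_nat p * z ^ (p - 1) * w ^ q * (z - w) ^ n - z ^ p * w ^ q * (of_nat n * (z - w) ^ (n - 1)))
        / ((z - w) ^ n * (z - w) ^ n)) (at z)"
    by (rule derivative_eq_intros refl)+ (use \<open>z - w \<noteq> 0\<close> in auto)
  then show "((\<lambda>\<zeta>. \<zeta> ^ p * w ^ q / (\<zeta> - w) ^ n) has_field_derivative
      of_nat p * basis_fun n (p - 1) q z w - of_nat n * basis_fun (Suc n) p q z w) (at z)"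
    using assms unfolding quotient_rule_power_eq[OF \<open>z - w \<noteq> 0\<close>]
    by (simp add: basis_fun_def restr_def mult.assoc)
  show "open {\<zeta>. Im \<zeta> > 0}" by (rule open_halfspace_Im_gt)
qed (use assms in \<open>auto simp: dom2_def basis_fun_def restr_def\<close>)

lemma basis_fun_has_derivative_w:
  assumes "dom2 z w"
  shows "((\<lambda>\<omega>. basis_fun n p q z \<omega>) has_field_derivative
    of_nat q * basis_fun n p (q - 1) z w + of_nat n * basis_fun (Suc n) p q z w) (at w)"
proof (rule has_field_derivative_transform_within_open)
  have "z - w \<noteq> 0" using assms by (auto dest: dom2_imp_neq)
  have "((\<lambda>\<omega>. z ^ p * \<omega> ^ q / (z - \<omega>) ^ n) has_field_derivative
      (of_nat q * z ^ p * w ^ (q - 1) * (z - w) ^ n - - (z ^ p * w ^ q) * (of_nat n * (z - w) ^ (n - 1)))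
        / ((z - w) ^ n * (z - w) ^ n)) (at w)"
    by (rule derivative_eq_intros refl)+ (use \<open>z - w \<noteq> 0\<close> in auto)
  then show "((\<lambda>\<omega>. z ^ p * \<omega> ^ q / (z - \<omega>) ^ n) has_field_derivative
      of_nat q * basis_fun n p (q - 1) z w + of_nat n * basis_fun (Suc n) p q z w) (at w)"
    using assms unfolding quotient_rule_power_eq[OF \<open>z - w \<noteq> 0\<close>]
    by (simp add: basis_fun_def restr_def mult.assoc)
  show "open {\<omega>. Im \<omega> < 0}" by (rule open_halfspace_Im_lt)
qed (use assms in \<open>auto simp: dom2_def basis_fun_def restr_def\<close>)

lemma Dz_basis_fun:
  "Dz (basis_fun n p q) = (\<lambda>z w. of_nat p * basis_fun n (p - 1) q z w - of_nat n * basis_fun (Suc n) p q z w)"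
  (is "_ = ?rhs")
proof (intro ext)
  fix z w
  show "Dz (basis_fun n p q) z w = ?rhs z w"
    using DERIV_imp_deriv[OF basis_fun_has_derivative_z]
    by (cases "dom2 z w") (simp_all add: Dz_def restr_def basis_fun_outside)
qed

lemma Dw_basis_fun:
  "Dw (basis_fun n p q) = (\<lambda>z w. of_nat q * basis_fun n p (q - 1) z w + of_nat n * basis_fun (Suc n) p q z w)"
  (is "_ = ?rhs")
proof (intro ext)
  fix z w
  show "Dw (basis_fun n p q) z w = ?rhs z w"
    using DERIV_imp_deriv[OF basis_fun_has_derivative_w]
    by (cases "dom2 z w") (simp_all add: Dw_def restr_def basis_fun_outside)
qed

lemma z_Dz_basis_fun:
  "z * Dz (basis_fun n p q) z w
    = of_nat p * basis_fun n p q z w - of_nat n * basis_fun (Suc n) (Suc p) q z w"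
  by (cases p) (simp_all add: Dz_basis_fun right_diff_distrib mult.left_commute[of z] mult_z_basis_fun)

lemma w_Dw_basis_fun:
  "w * Dw (basis_fun n p q) z w
    = of_nat q * basis_fun n p q z w + of_nat n * basis_fun (Suc n) p (Suc q) z w"
  by (cases q) (simp_all add: Dw_basis_fun distrib_left mult.left_commute[of w] mult_w_basis_fun)

text \<open>Both terms are of level \<open>n + 1\<close>; for \<open>p = n\<close> the term \<open>e(n+1,n+2,q)\<close>, whose index is
  out of range, has coefficient \<open>0\<close>.\<close>

lemma z2_Dz_basis_fun:
  "z\<^sup>2 * Dz (basis_fun n p q) z w
    = (of_nat p - of_nat n) * basis_fun (Suc n) (Suc (Suc p)) q z w
      - of_nat p * basis_fun (Suc n) (Suc p) (Suc q) z w"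
proof -
  have "z\<^sup>2 * Dz (basis_fun n p q) z w
      = of_nat p * basis_fun n (Suc p) q z w - of_nat n * basis_fun (Suc n) (Suc (Suc p)) q z w"
    by (simp add: power2_eq_square mult.assoc z_Dz_basis_fun right_diff_distrib
        mult.left_commute[of z] mult_z_basis_fun)
  then show ?thesis
    by (simp add: basis_fun_eq_diff[of n "Suc p" q] algebra_simps)
qed

lemma w2_Dw_basis_fun:
  "w\<^sup>2 * Dw (basis_fun n p q) z w
    = of_nat q * basis_fun (Suc n) (Suc p) (Suc q) z w
      + (of_nat n - of_nat q) * basis_fun (Suc n) p (Suc (Suc q)) z w"
proof -
  have "w\<^sup>2 * Dw (basis_fun n p q) z w
      = of_nat q * basis_fun n p (Suc q) z w + of_nat n * basis_fun (Suc n) p (Suc (Suc q)) z w"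
    by (simp add: power2_eq_square mult.assoc w_Dw_basis_fun distrib_left
        mult.left_commute[of w] mult_w_basis_fun)
  then show ?thesis
    by (simp add: basis_fun_eq_diff[of n p "Suc q"] algebra_simps)
qed


section \<open>Linearity on separately holomorphic functions\<close>

text \<open>\<open>deriv\<close> of a function that is not differentiable is unspecified, so \<open>Dz\<close> and \<open>Dw\<close> are
  linear only on this subspace.\<close>

definition separately_holomorphic :: "cfun2 \<Rightarrow> bool" where
  "separately_holomorphic f \<longleftrightarrow> (\<forall>z w. dom2 z w \<longrightarrow>
     (\<lambda>\<zeta>. f \<zeta> w) field_differentiable at z \<and> (\<lambda>\<omega>. f z \<omega>) field_differentiable at w)"

lemma subspace_separately_holomorphic: "fun2.subspace (Collect separately_holomorphic)"
proof (rule fun2.subspaceI)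
  show "0 \<in> Collect separately_holomorphic"
    by (simp add: separately_holomorphic_def)
  show "f + g \<in> Collect separately_holomorphic"
    if "f \<in> Collect separately_holomorphic" "g \<in> Collect separately_holomorphic" for f g
    using that by (simp add: separately_holomorphic_def field_differentiable_add)
  show "(\<lambda>z w. c * f z w) \<in> Collect separately_holomorphic"
    if "f \<in> Collect separately_holomorphic" for c f
    using that by (simp add: separately_holomorphic_def field_differentiable_mult field_differentiable_const)
qed

lemma separately_holomorphic_basis_fun: "separately_holomorphic (basis_fun n p q)"
  unfolding separately_holomorphic_def field_differentiable_def
  using basis_fun_has_derivative_z basis_fun_has_derivative_w by blast

lemma deriv_lincomb:
  "f field_differentiable at z \<Longrightarrow> g field_differentiable at z \<Longrightarrow>
    deriv (\<lambda>x. a * f x + b * g x) z = a * deriv f z + b * deriv g z"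
  by (simp add: field_differentiable_mult field_differentiable_const)

lemma Dz_lincomb:
  assumes "separately_holomorphic f" "separately_holomorphic g"
  shows "Dz (\<lambda>z w. a * f z w + b * g z w) = (\<lambda>z w. a * Dz f z w + b * Dz g z w)"
  using assms by (simp add: fun_eq_iff Dz_def restr_def separately_holomorphic_def deriv_lincomb)

lemma Dw_lincomb:
  assumes "separately_holomorphic f" "separately_holomorphic g"
  shows "Dw (\<lambda>z w. a * f z w + b * g z w) = (\<lambda>z w. a * Dw f z w + b * Dw g z w)"
  using assms by (simp add: fun_eq_iff Dw_def restr_def separately_holomorphic_def deriv_lincomb)

lemma six_ops_lincomb:
  assumes "T \<in> six_ops" "separately_holomorphic f" "separately_holomorphic g"
  shows "T (\<lambda>z w. a * f z w + b * g z w) = (\<lambda>z w. a * T f z w + b * T g z w)"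
  using assms(1) Dz_lincomb[OF assms(2,3)] Dw_lincomb[OF assms(2,3)]
  unfolding six_ops_def by (auto simp: fun_eq_iff algebra_simps)

lemma six_ops_image_span_subset:
  assumes "T \<in> six_ops" "X \<subseteq> Collect separately_holomorphic" "T ` X \<subseteq> fun2.span Y"
  shows "T ` fun2.span X \<subseteq> fun2.span Y"
  using assms
  by (intro fun2.image_span_subset[OF subspace_separately_holomorphic])
    (auto simp: func_plus six_ops_lincomb)


section \<open>Invariance of \<open>A_all\<close>\<close>

definition A_basis :: "cfun2 set" where
  "A_basis = {basis_fun n p q | n p q. (p, q) \<in> Omega n}"

lemma A_basis_separately_holomorphic: "A_basis \<subseteq> Collect separately_holomorphic"
  by (auto simp: A_basis_def separately_holomorphic_basis_fun)

lemma A_n_eq_span: "A_n n = fun2.span ((\<lambda>(p, q). basis_fun n p q) ` Omega n)"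
  by (simp add: A_n_def cspan2_eq_span)

lemma A_all_eq_sums: "A_all = {sum g N | N g. finite N \<and> (\<forall>n\<in>N. g n \<in> A_n n)}"
proof -
  have "(\<lambda>z w. \<Sum>n\<in>N. g n z w) = sum g N" for N and g :: "nat \<Rightarrow> cfun2"
    by (simp add: fun_eq_iff sum_fun_apply)
  then show ?thesis
    unfolding A_all_def by auto
qed

lemma subspace_A_all: "fun2.subspace A_all"
proof (rule fun2.subspaceI)
  have "0 = sum g {}" for g :: "nat \<Rightarrow> cfun2" by simp
  then show "0 \<in> A_all"
    unfolding A_all_eq_sums by blast
next
  fix f g assume "f \<in> A_all" "g \<in> A_all"
  then obtain N1 g1 N2 g2 where N1: "finite N1" "\<forall>n\<in>N1. g1 n \<in> A_n n" "f = sum g1 N1"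
    and N2: "finite N2" "\<forall>n\<in>N2. g2 n \<in> A_n n" "g = sum g2 N2"
    unfolding A_all_eq_sums by blast
  define G where "G n = (if n \<in> N1 then g1 n else 0) + (if n \<in> N2 then g2 n else 0)" for n
  have "f + g = sum G (N1 \<union> N2)"
    using N1 N2 unfolding G_def sum.distrib
    by (simp add: sum.If_cases Int_absorb1 Int_absorb2 Int_commute)
  moreover have "G n \<in> A_n n" for n
    using N1(2) N2(2) unfolding G_def A_n_eq_span
    by (auto intro!: fun2.span_add fun2.span_zero)
  ultimately show "f + g \<in> A_all"
    unfolding A_all_eq_sums using N1(1) N2(1) by blast
next
  fix c and f assume "f \<in> A_all"
  then obtain N g where N: "finite N" "\<forall>n\<in>N. g n \<in> A_n n" "f = sum g N"
    unfolding A_all_eq_sums by blast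
  have "(\<lambda>z w. c * f z w) = (\<Sum>n\<in>N. (\<lambda>z w. c * g n z w))"
    using N(3) by (simp add: fun_eq_iff sum_fun_apply sum_distrib_left)
  moreover have "\<forall>n\<in>N. (\<lambda>z w. c * g n z w) \<in> A_n n"
    using N(2) unfolding A_n_eq_span by (blast intro: fun2.span_scale)
  ultimately show "(\<lambda>z w. c * f z w) \<in> A_all"
    unfolding A_all_eq_sums using N(1) by blast
qed

lemma A_all_eq_span: "A_all = fun2.span A_basis"
proof
  have "A_n n \<subseteq> fun2.span A_basis" for n
    unfolding A_n_eq_span by (rule fun2.span_mono) (auto simp: A_basis_def)
  then show "A_all \<subseteq> fun2.span A_basis"
    unfolding A_all_eq_sums by (auto intro!: fun2.span_sum)
next
  have "basis_fun n p q \<in> A_all" if "(p, q) \<in> Omega n" for n p q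
  proof -
    have "basis_fun n p q \<in> A_n n"
      unfolding A_n_eq_span using that by (auto intro: fun2.span_base)
    moreover have "basis_fun n p q = sum (\<lambda>_. basis_fun n p q) {n}" by simp
    ultimately show ?thesis
      unfolding A_all_eq_sums by blast
  qed
  then show "fun2.span A_basis \<subseteq> A_all"
    by (intro fun2.span_minimal subspace_A_all) (auto simp: A_basis_def)
qed

lemma basis_fun_mem_span_A_basis:
  assumes "a \<le> k" "b \<le> k"
  shows "basis_fun k a b \<in> fun2.span A_basis"
proof -
  have "(Suc a, b) \<in> Omega (Suc k)" "(a, Suc b) \<in> Omega (Suc k)"
    using assms by (auto simp: Omega_def)
  then have "basis_fun (Suc k) (Suc a) b \<in> A_basis" "basis_fun (Suc k) a (Suc b) \<in> A_basis"
    unfolding A_basis_def by blast+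
  then show ?thesis
    unfolding basis_fun_eq_diff[of k a b] by (intro fun2.span_diff fun2.span_base)
qed

lemma scaled_basis_fun_mem_span_A_basis:
  "a \<le> k \<Longrightarrow> b \<le> k \<Longrightarrow> (\<lambda>z w. c * basis_fun k a b z w) \<in> fun2.span A_basis"
  by (intro fun2.span_scale basis_fun_mem_span_A_basis)

lemma z2_Dz_basis_fun_mem_span_A_basis:
  assumes "(p, q) \<in> Omega n"
  shows "(\<lambda>z w. z\<^sup>2 * Dz (basis_fun n p q) z w) \<in> fun2.span A_basis"
proof (cases "p = n")
  case True
  with assms have "q < n" by (simp add: Omega_def)
  moreover have "(\<lambda>z w. z\<^sup>2 * Dz (basis_fun n p q) z w)
      = (\<lambda>z w. (- of_nat n) * basis_fun (Suc n) (Suc n) (Suc q) z w)"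
    using True by (simp add: fun_eq_iff z2_Dz_basis_fun)
  ultimately show ?thesis
    using scaled_basis_fun_mem_span_A_basis[where c = "- of_nat n" and k = "Suc n"] by simp
next
  case False
  with assms show ?thesis
    unfolding z2_Dz_basis_fun
    by (intro fun2_span_diff scaled_basis_fun_mem_span_A_basis) (auto simp: Omega_def)
qed

lemma w2_Dw_basis_fun_mem_span_A_basis:
  assumes "(p, q) \<in> Omega n"
  shows "(\<lambda>z w. w\<^sup>2 * Dw (basis_fun n p q) z w) \<in> fun2.span A_basis"
proof (cases "q = n")
  case True
  with assms have "p < n" by (auto simp: Omega_def)
  moreover have "(\<lambda>z w. w\<^sup>2 * Dw (basis_fun n p q) z w)
      = (\<lambda>z w. of_nat n * basis_fun (Suc n) (Suc p) (Suc n) z w)"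
    using True by (simp add: fun_eq_iff w2_Dw_basis_fun)
  ultimately show ?thesis
    by (simp add: scaled_basis_fun_mem_span_A_basis)
next
  case False
  with assms show ?thesis
    unfolding w2_Dw_basis_fun
    by (intro fun2_span_add scaled_basis_fun_mem_span_A_basis) (auto simp: Omega_def)
qed

lemma six_ops_basis_fun_mem_span_A_basis:
  assumes "T \<in> six_ops" "(p, q) \<in> Omega n"
  shows "T (basis_fun n p q) \<in> fun2.span A_basis"
proof -
  have pq: "p \<le> n" "q \<le> n"
    using assms(2) by (auto simp: Omega_def)
  note mem = scaled_basis_fun_mem_span_A_basis
  from assms(1) consider "T = Dz" | "T = (\<lambda>f z w. z * Dz f z w)" | "T = (\<lambda>f z w. z\<^sup>2 * Dz f z w)"
    | "T = Dw" | "T = (\<lambda>f z w. w * Dw f z w)" | "T = (\<lambda>f z w. w\<^sup>2 * Dw f z w)"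
    unfolding six_ops_def by blast
  then show ?thesis
  proof cases
    case 1
    show ?thesis unfolding 1 Dz_basis_fun using pq by (intro fun2_span_diff mem) auto
  next
    case 2
    show ?thesis unfolding 2 z_Dz_basis_fun using pq by (intro fun2_span_diff mem) auto
  next
    case 3
    show ?thesis unfolding 3 using z2_Dz_basis_fun_mem_span_A_basis[OF assms(2)] by simp
  next
    case 4
    show ?thesis unfolding 4 Dw_basis_fun using pq by (intro fun2_span_add mem) auto
  next
    case 5
    show ?thesis unfolding 5 w_Dw_basis_fun using pq by (intro fun2_span_add mem) auto
  next
    case 6
    show ?thesis unfolding 6 using w2_Dw_basis_fun_mem_span_A_basis[OF assms(2)] by simp
  qed
qed

lemma six_ops_preserve_span_A_basis:
  assumes "T \<in> six_ops"
  shows "T ` fun2.span A_basis \<subseteq> fun2.span A_basis"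
proof (rule six_ops_image_span_subset[OF assms A_basis_separately_holomorphic])
  show "T ` A_basis \<subseteq> fun2.span A_basis"
    using six_ops_basis_fun_mem_span_A_basis[OF assms] by (auto simp: A_basis_def)
qed


section \<open>Cyclicity of \<open>1 / (z - w)\<close>\<close>

context
  fixes V :: "cfun2 set"
  assumes subspace_V: "fun2.subspace V"
    and six_ops_closed: "\<And>T. T \<in> six_ops \<Longrightarrow> T ` V \<subseteq> V"
    and seed_mem: "basis_fun 1 0 0 \<in> V"
begin

lemma mem_if_six_op_lincomb:
  assumes "T \<in> six_ops" "f \<in> V" "\<And>z w. T f z w = a * f z w + b * h z w" "b \<noteq> 0"
  shows "h \<in> V"
proof -
  have "T f \<in> V"
    using six_ops_closed[OF assms(1)] assms(2) by blast
  have "h = (\<lambda>z w. (1 / b) * T f z w) - (\<lambda>z w. (a / b) * f z w)"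
  proof (intro ext)
    fix z w
    show "h z w = ((\<lambda>z w. (1 / b) * T f z w) - (\<lambda>z w. (a / b) * f z w)) z w"
      using assms(4) unfolding assms(3) by (simp add: field_simps)
  qed
  also have "\<dots> \<in> V"
    using subspace_V \<open>T f \<in> V\<close> assms(2)
    by (intro fun2.subspace_diff fun2.subspace_scale)
  finally show ?thesis .
qed

lemma raise_level_by_Dz:
  assumes "n \<noteq> 0" "basis_fun n 0 q \<in> V"
  shows "basis_fun (Suc n) 0 q \<in> V"
  by (rule mem_if_six_op_lincomb[where T = Dz and f = "basis_fun n 0 q" and a = 0 and b = "- of_nat n"])
    (use assms in \<open>simp_all add: six_ops_def Dz_basis_fun\<close>)

lemma raise_level_by_z_Dz:
  assumes "n \<noteq> 0" "basis_fun n p q \<in> V"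
  shows "basis_fun (Suc n) (Suc p) q \<in> V"
  by (rule mem_if_six_op_lincomb[where T = "\<lambda>f z w. z * Dz f z w" and f = "basis_fun n p q"
        and a = "of_nat p" and b = "- of_nat n"])
    (use assms in \<open>simp_all add: six_ops_def z_Dz_basis_fun\<close>)

lemma raise_level_by_w_Dw:
  assumes "n \<noteq> 0" "basis_fun n p q \<in> V"
  shows "basis_fun (Suc n) p (Suc q) \<in> V"
  by (rule mem_if_six_op_lincomb[where T = "\<lambda>f z w. w * Dw f z w" and f = "basis_fun n p q"
        and a = "of_nat q" and b = "of_nat n"])
    (use assms in \<open>simp_all add: six_ops_def w_Dw_basis_fun\<close>)

lemma raise_level_by_z2_Dz_zero:
  assumes "n \<noteq> 0" "basis_fun n 0 q \<in> V"
  shows "basis_fun (Suc n) 2 q \<in> V"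
  unfolding numeral_2_eq_2
  by (rule mem_if_six_op_lincomb[where T = "\<lambda>f z w. z\<^sup>2 * Dz f z w" and f = "basis_fun n 0 q"
        and a = 0 and b = "- of_nat n"])
    (use assms in \<open>simp_all add: six_ops_def z2_Dz_basis_fun\<close>)

lemma raise_level_by_z2_Dz_diag:
  assumes "n \<noteq> 0" "basis_fun n n q \<in> V"
  shows "basis_fun (Suc n) (Suc n) (Suc q) \<in> V"
  by (rule mem_if_six_op_lincomb[where T = "\<lambda>f z w. z\<^sup>2 * Dz f z w" and f = "basis_fun n n q"
        and a = 0 and b = "- of_nat n"])
    (use assms in \<open>simp_all add: six_ops_def z2_Dz_basis_fun\<close>)

lemma raise_level_by_w2_Dw_zero:
  assumes "n \<noteq> 0" "basis_fun n p 0 \<in> V"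
  shows "basis_fun (Suc n) p 2 \<in> V"
  unfolding numeral_2_eq_2
  by (rule mem_if_six_op_lincomb[where T = "\<lambda>f z w. w\<^sup>2 * Dw f z w" and f = "basis_fun n p 0"
        and a = 0 and b = "of_nat n"])
    (use assms in \<open>simp_all add: six_ops_def w2_Dw_basis_fun\<close>)

lemma raise_level_by_w2_Dw_diag:
  assumes "n \<noteq> 0" "basis_fun n p n \<in> V"
  shows "basis_fun (Suc n) (Suc p) (Suc n) \<in> V"
  by (rule mem_if_six_op_lincomb[where T = "\<lambda>f z w. w\<^sup>2 * Dw f z w" and f = "basis_fun n p n"
        and a = 0 and b = "of_nat n"])
    (use assms in \<open>simp_all add: six_ops_def w2_Dw_basis_fun\<close>)

lemma lower_level_by_diff:
  "basis_fun (Suc k) (Suc a) b \<in> V \<Longrightarrow> basis_fun (Suc k) a (Suc b) \<in> V \<Longrightarrow> basis_fun k a b \<in> V"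
  unfolding basis_fun_eq_diff[of k a b] by (rule fun2.subspace_diff[OF subspace_V])

lemma basis_fun_level_one_mem:
  assumes "a \<le> 1" "b \<le> 1"
  shows "basis_fun 1 a b \<in> V"
proof -
  have e220: "basis_fun 2 2 0 \<in> V" and e022: "basis_fun 2 0 2 \<in> V"
    using raise_level_by_z2_Dz_zero[of 1 0] raise_level_by_w2_Dw_zero[of 1 0] seed_mem
    by (simp_all add: numeral_eq_Suc)
  have "basis_fun 3 2 1 \<in> V" "basis_fun 3 1 2 \<in> V"
    using raise_level_by_w_Dw[OF _ e220] raise_level_by_z_Dz[OF _ e022]
    by (simp_all add: numeral_eq_Suc)
  then have e211: "basis_fun 2 1 1 \<in> V"
    using lower_level_by_diff[of 2 1 1] by (simp add: numeral_eq_Suc)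
  have e110: "basis_fun 1 1 0 \<in> V" and e101: "basis_fun 1 0 1 \<in> V"
    using lower_level_by_diff[of 1 1 0] lower_level_by_diff[of 1 0 1] e220 e211 e022
    by (simp_all add: numeral_eq_Suc)
  have "basis_fun 2 2 1 \<in> V" "basis_fun 2 1 2 \<in> V"
    using raise_level_by_z2_Dz_diag[OF _ e110] raise_level_by_w2_Dw_diag[OF _ e101]
    by (simp_all add: numeral_eq_Suc)
  then have e111: "basis_fun 1 1 1 \<in> V"
    using lower_level_by_diff[of 1 1 1] by (simp add: numeral_eq_Suc)
  show ?thesis
    using assms seed_mem e110 e101 e111 by (cases a; cases b) auto
qed

lemma basis_fun_level_Suc_mem:
  assumes "n \<noteq> 0" "\<And>a b. a \<le> n \<Longrightarrow> b \<le> n \<Longrightarrow> basis_fun n a b \<in> V"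
    and "a \<le> Suc n" "b \<le> Suc n"
  shows "basis_fun (Suc n) a b \<in> V"
proof (cases "b \<le> n")
  case True
  show ?thesis
  proof (cases a)
    case 0
    then show ?thesis using raise_level_by_Dz[OF assms(1,2)] True by simp
  next
    case (Suc a')
    then show ?thesis using raise_level_by_z_Dz[OF assms(1,2)] True assms(3) by simp
  qed
next
  case False
  then have b: "b = Suc n" using assms(4) by simp
  show ?thesis
  proof (cases "a \<le> n")
    case True
    then show ?thesis using raise_level_by_w_Dw[OF assms(1,2)] b by simp
  next
    case False
    then have "a = Suc n" using assms(3) by simp
    then show ?thesis using raise_level_by_z2_Dz_diag[OF assms(1,2)] b by simp
  qed
qed

lemma basis_fun_mem_invariant_subspace:
  assumes "a \<le> n" "b \<le> n"
  shows "basis_fun n a b \<in> V"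
proof (cases "n = 0")
  case True
  then show ?thesis
    using assms lower_level_by_diff[of 0 0 0] basis_fun_level_one_mem by simp
next
  case False
  then have "0 < n" by simp
  then show ?thesis
    using assms
  proof (induction n arbitrary: a b rule: nat_induct_non_zero)
    case 1
    then show ?case by (rule basis_fun_level_one_mem)
  next
    case (Suc n)
    show ?case by (rule basis_fun_level_Suc_mem) (use Suc in auto)
  qed
qed

end

lemma span_orbit_eq_span_A_basis: "fun2.span (orbit six_ops (basis_fun 1 0 0)) = fun2.span A_basis"
  (is "fun2.span ?O = _")
proof -
  have orbit_in_A: "?O \<subseteq> fun2.span A_basis"
    using basis_fun_mem_span_A_basis[of 0 1 0] six_ops_preserve_span_A_basis
    by (intro orbit_subset) simp_all
  moreover have "fun2.span A_basis \<subseteq> Collect separately_holomorphic"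
    by (rule fun2.span_minimal[OF A_basis_separately_holomorphic subspace_separately_holomorphic])
  ultimately have holomorphic: "?O \<subseteq> Collect separately_holomorphic"
    by (rule order_trans)
  have closed: "T ` fun2.span ?O \<subseteq> fun2.span ?O" if "T \<in> six_ops" for T
  proof (rule six_ops_image_span_subset[OF that holomorphic])
    show "T ` ?O \<subseteq> fun2.span ?O"
      using orbit_step[OF that] fun2.span_base by blast
  qed
  have "basis_fun n p q \<in> fun2.span ?O" if "(p, q) \<in> Omega n" for n p q
    using that basis_fun_mem_invariant_subspace[OF fun2.subspace_span closed fun2.span_base[OF orbit_base]]
    by (simp add: Omega_def)
  then have "A_basis \<subseteq> fun2.span ?O"
    unfolding A_basis_def by blast
  with orbit_in_A show ?thesis
    by (intro equalityI fun2.span_minimal) simp_all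
qed

theorem lemma1:
  shows "(\<forall>T\<in>six_ops. \<forall>f\<in>A_all. T f \<in> A_all)
    \<and> cspan2 {foldr (\<circ>) Ts id (restr (\<lambda>z w. 1 / (z - w))) | Ts. set Ts \<subseteq> six_ops} = A_all"
proof -
  have "restr (\<lambda>z w. 1 / (z - w)) = basis_fun 1 0 0"
    by (simp add: basis_fun_def)
  then have orbit: "{foldr (\<circ>) Ts id (restr (\<lambda>z w. 1 / (z - w))) | Ts. set Ts \<subseteq> six_ops}
      = orbit six_ops (basis_fun 1 0 0)"
    by (simp only: orbit_def)
  show ?thesis
    unfolding orbit A_all_eq_span cspan2_eq_span span_orbit_eq_span_A_basis
    using six_ops_preserve_span_A_basis by blast
qed

end
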